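(* Let $p\in(0,1)$ and let $(\lambda_n)_{n\ge1}$ be a sequence with $\lambda_1=1$ and $0\le\lambda_n\le\lambda_{n-1}$ for all $n>1$. Let $r_1,r_2,\dots$ be $\{0,1\}$-valued random variables with $\Pr(r_1=1)=p$ and, for every $n\ge2$, $\Pr(r_n=1\mid r_1,\dots,r_{n-1})=\lambda_n p+(1-\lambda_n)\bar p_{n-1}$, where $\bar p_m=\frac1m\sum_{i=1}^m r_i$. Then for every $n\ge2$, $\mathrm{Cov}[\bar p_{n-1},r_n]=(1-\lambda_n)\,\mathrm{Var}[\bar p_{n-1}]$. *)

theory Defs
  imports "HOL-Probability.Probability"
begin

text \<open>Random variables are indexed from 1: r 1, r 2, ...; only indices i \<ge> 1 are used.\<close>

definition pbar :: "(nat \<Rightarrow> 'a \<Rightarrow> real) \<Rightarrow> nat \<Rightarrow> 'a \<Rightarrow> real" where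
  "pbar r m x = (\<Sum>i=1..m. r i x) / real m"

definition hist :: "'a measure \<Rightarrow> (nat \<Rightarrow> 'a \<Rightarrow> real) \<Rightarrow> nat \<Rightarrow> 'a measure" where
  "hist M r n = sigma (space M)
     (\<Union>i\<in>{1..<n}. {r i -` A \<inter> space M | A. A \<in> sets borel})"

definition expect :: "'a measure \<Rightarrow> ('a \<Rightarrow> real) \<Rightarrow> real" where
  "expect M X = integral\<^sup>L M X"

definition covariance :: "'a measure \<Rightarrow> ('a \<Rightarrow> real) \<Rightarrow> ('a \<Rightarrow> real) \<Rightarrow> real" where
  "covariance M X Y = expect M (\<lambda>x. (X x - expect M X) * (Y x - expect M Y))"

definition var :: "'a measure \<Rightarrow> ('a \<Rightarrow> real) \<Rightarrow> real" where
  "var M X = expect M (\<lambda>x. (X x - expect M X)\<^sup>2)"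

end

theory Submission
  imports Defs
begin

text \<open>Since \<open>pbar r (n - 1)\<close> is measurable with respect to the history, the tower property
  gives \<open>E[pbar r_n] = E[pbar (\<lambda>p + (1 - \<lambda>) pbar)]\<close> and \<open>E[r_n] = \<lambda>p + (1 - \<lambda>) E[pbar]\<close>.
  In the covariance the constant \<open>\<lambda>p\<close> cancels and only \<open>(1 - \<lambda>)\<close> times the variance
  of \<open>pbar\<close> remains. Hence the identity holds whenever the conditional expectation of one
  variable is an affine function of another, measurable, bounded one.\<close>

lemma covariance_cong:
  assumes "\<And>x. x \<in> space M \<Longrightarrow> Y x = Y' x"
  shows "covariance M X Y = covariance M X Y'"
proof -
  have "expect M Y = expect M Y'"
    unfolding expect_def by (rule Bochner_Integration.integral_cong) (use assms in auto)
  then show ?thesis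
    unfolding covariance_def expect_def
    by (intro Bochner_Integration.integral_cong) (use assms in auto)
qed

lemma var_eq_covariance: "var M X = covariance M X X"
  unfolding var_def covariance_def by (simp add: power2_eq_square)

lemma (in prob_space) covariance_eq_expect_mult_minus:
  assumes "integrable M X" "integrable M Y" "integrable M (\<lambda>x. X x * Y x)"
  shows "covariance M X Y = expect M (\<lambda>x. X x * Y x) - expect M X * expect M Y"
proof -
  have "covariance M X Y = expect M (\<lambda>x. X x * Y x - expect M Y * X x - expect M X * Y x
                                      + expect M X * expect M Y)"
    unfolding covariance_def by (simp add: algebra_simps)
  also have "\<dots> = expect M (\<lambda>x. X x * Y x) - expect M X * expect M Y"
    unfolding expect_def using assms prob_space by simp
  finally show ?thesis .
qed

lemma (in prob_space) covariance_affine_cond_exp: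
  assumes subalg: "subalgebra M F"
    and X_F: "X \<in> borel_measurable F" and Y_M: "Y \<in> borel_measurable M"
    and X_bound: "\<And>x. x \<in> space M \<Longrightarrow> \<bar>X x\<bar> \<le> B"
    and Y_bound: "\<And>x. x \<in> space M \<Longrightarrow> \<bar>Y x\<bar> \<le> C"
    and affine: "AE x in M. real_cond_exp M F Y x = c + d * X x"
  shows "covariance M X Y = d * var M X"
proof -
  interpret finite_measure_subalgebra M F
    by unfold_locales (rule subalg)
  have X_M: "X \<in> borel_measurable M"
    by (rule measurable_from_subalg[OF subalg X_F])
  have int_X: "integrable M X"
    by (rule integrable_const_bound[where B=B]) (use X_bound X_M in auto)
  have int_Y: "integrable M Y"
    by (rule integrable_const_bound[where B=C]) (use Y_bound Y_M in auto)
  have XY_bound: "\<bar>X x * Y x\<bar> \<le> B * C" and XX_bound: "\<bar>X x * X x\<bar> \<le> B * B"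
    if "x \<in> space M" for x
    unfolding abs_mult using X_bound[OF that] Y_bound[OF that]
    by (meson abs_ge_zero mult_mono order_trans)+
  have int_XY: "integrable M (\<lambda>x. X x * Y x)"
    by (rule integrable_const_bound[where B="B * C"]) (use XY_bound X_M Y_M in auto)
  have int_XX: "integrable M (\<lambda>x. X x * X x)"
    by (rule integrable_const_bound[where B="B * B"]) (use XX_bound X_M in auto)
  have E_XY: "expect M (\<lambda>x. X x * Y x) = c * expect M X + d * expect M (\<lambda>x. X x * X x)"
  proof -
    have "expect M (\<lambda>x. X x * Y x) = (\<integral>x. X x * real_cond_exp M F Y x \<partial>M)"
      unfolding expect_def using real_cond_exp_intg(2)[OF int_XY X_F Y_M] by simp
    also have "\<dots> = (\<integral>x. c * X x + d * (X x * X x) \<partial>M)"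
      by (rule integral_cong_AE) (use affine X_M in \<open>auto simp: algebra_simps\<close>)
    also have "\<dots> = c * expect M X + d * expect M (\<lambda>x. X x * X x)"
      unfolding expect_def using int_X int_XX by simp
    finally show ?thesis .
  qed
  have E_Y: "expect M Y = c + d * expect M X"
  proof -
    have "expect M Y = (\<integral>x. real_cond_exp M F Y x \<partial>M)"
      unfolding expect_def using real_cond_exp_int(2)[OF int_Y] by simp
    also have "\<dots> = (\<integral>x. c + d * X x \<partial>M)"
      by (rule integral_cong_AE) (use affine X_M in auto)
    also have "\<dots> = c + d * expect M X"
      unfolding expect_def using int_X prob_space by simp
    finally show ?thesis .
  qed
  show ?thesis
    unfolding var_eq_covariance
      covariance_eq_expect_mult_minus[OF int_X int_Y int_XY]
      covariance_eq_expect_mult_minus[OF int_X int_X int_XX] E_XY E_Y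
    by (simp add: algebra_simps)
qed

lemma space_hist [simp]: "space (hist M r n) = space M"
  unfolding hist_def by (rule space_measure_of) auto

lemma sets_hist:
  "sets (hist M r n) = sigma_sets (space M) (\<Union>i\<in>{1..<n}. {r i -` A \<inter> space M | A. A \<in> sets borel})"
  unfolding hist_def by (rule sets_measure_of) auto

lemma subalgebra_hist:
  assumes "\<And>i. 1 \<le> i \<Longrightarrow> i < n \<Longrightarrow> r i \<in> borel_measurable M"
  shows "subalgebra M (hist M r n)"
proof -
  have "(\<Union>i\<in>{1..<n}. {r i -` A \<inter> space M | A. A \<in> sets borel}) \<subseteq> sets M"
    using assms by (auto intro: measurable_sets)
  then show ?thesis
    unfolding subalgebra_def sets_hist by (simp add: sets.sigma_sets_subset)
qed

lemma measurable_hist: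
  assumes "1 \<le> i" "i < n"
  shows "r i \<in> borel_measurable (hist M r n)"
proof (rule measurableI)
  fix A :: "real set"
  assume "A \<in> sets borel"
  then have "r i -` A \<inter> space M \<in> (\<Union>i\<in>{1..<n}. {r i -` A \<inter> space M | A. A \<in> sets borel})"
    using assms by force
  then show "r i -` A \<inter> space (hist M r n) \<in> sets (hist M r n)"
    unfolding sets_hist space_hist by (rule sigma_sets.Basic)
qed auto

lemma pbar_measurable_hist:
  assumes "m < n"
  shows "pbar r m \<in> borel_measurable (hist M r n)"
  unfolding pbar_def[abs_def] using assms
  by (intro borel_measurable_divide borel_measurable_sum measurable_hist) auto

lemma pbar_in_unit_interval:
  assumes "\<And>i. 1 \<le> i \<Longrightarrow> i \<le> m \<Longrightarrow> r i x \<in> {0..1}"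
  shows "pbar r m x \<in> {0..1}"
proof -
  have "0 \<le> (\<Sum>i=1..m. r i x)" "(\<Sum>i=1..m. r i x) \<le> real m"
    using sum_mono[of "{1..m}" "\<lambda>i. r i x" "\<lambda>_. 1"] sum_nonneg[of "{1..m}" "\<lambda>i. r i x"] assms
    by auto
  then show ?thesis
    unfolding pbar_def by (cases "m = 0") (auto simp: field_simps)
qed

text \<open>Only the affine form of the conditional expectation enters the proof.\<close>

theorem lemmaA3:
  fixes M :: "'a measure" and r :: "nat \<Rightarrow> 'a \<Rightarrow> real"
    and lam :: "nat \<Rightarrow> real" and p :: real
  assumes "prob_space M"
    and "0 < p" and "p < 1"
    and "lam 1 = 1"
    and "\<And>n. n > 1 \<Longrightarrow> 0 \<le> lam n \<and> lam n \<le> lam (n - 1)"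
    and "\<And>i. i \<ge> 1 \<Longrightarrow> r i \<in> borel_measurable M"
    and "\<And>i x. i \<ge> 1 \<Longrightarrow> x \<in> space M \<Longrightarrow> r i x \<in> {0, 1}"
    and "measure M {x \<in> space M. r 1 x = 1} = p"
    and "\<And>n. n \<ge> 2 \<Longrightarrow>
           AE x in M. real_cond_exp M (hist M r n) (indicator {x \<in> space M. r n x = 1}) x
                      = lam n * p + (1 - lam n) * pbar r (n - 1) x"
    and "n \<ge> 2"
  shows "covariance M (pbar r (n - 1)) (r n) = (1 - lam n) * var M (pbar r (n - 1))"
proof -
  interpret prob_space M by fact
  let ?hit = "indicator {x \<in> space M. r n x = 1} :: 'a \<Rightarrow> real"
  have r_n_eq_hit: "r n x = ?hit x" if "x \<in> space M" for x
    using assms(7)[of n x] that \<open>n \<ge> 2\<close> by (auto simp: indicator_def)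
  have "covariance M (pbar r (n - 1)) (r n) = covariance M (pbar r (n - 1)) ?hit"
    by (rule covariance_cong) (rule r_n_eq_hit)
  also have "\<dots> = (1 - lam n) * var M (pbar r (n - 1))"
  proof (rule covariance_affine_cond_exp[where B=1 and C=1])
    show "subalgebra M (hist M r n)"
      using assms(6) by (intro subalgebra_hist) auto
    show "pbar r (n - 1) \<in> borel_measurable (hist M r n)"
      using \<open>n \<ge> 2\<close> by (intro pbar_measurable_hist) auto
    have "r n \<in> borel_measurable M"
      using assms(6) \<open>n \<ge> 2\<close> by simp
    then show "?hit \<in> borel_measurable M"
      by (intro borel_measurable_indicator) measurable
    show "\<bar>pbar r (n - 1) x\<bar> \<le> 1" if "x \<in> space M" for x
      using pbar_in_unit_interval[of "n - 1" r x] assms(7) that by fastforce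
    show "\<bar>?hit x\<bar> \<le> 1" for x
      by (simp add: indicator_def)
    show "AE x in M. real_cond_exp M (hist M r n) ?hit x
            = lam n * p + (1 - lam n) * pbar r (n - 1) x"
      using assms(9)[OF \<open>n \<ge> 2\<close>] .
  qed
  finally show ?thesis .
qed

end
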